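(* Let $\epsilon \in (0,1/2]$ and let $n$ be large. Let $d$ be an integer with $d \geq 6\epsilon^{-2}\log n$ and $d = \Theta(\epsilon^{-2}\log n)$. Let $Q \in \mathbb{R}^{n\times d}$ be a random matrix whose entries are independent and uniformly distributed on $\{+1/\sqrt{d}, -1/\sqrt{d}\}$, and let $M = \sigma(QQ^\top)\in\mathbb{R}^{n\times n}$, where $\sigma$ is the entrywise exponential function. Then: (1) For any $\gamma\in[0,1]$, with probability at least $1-n^{-1}$ there exists a sparse + low-rank estimator of $M$ (a matrix $S+R$ with $S$ sparse and $R$ low-rank) with $O(\gamma^{-1} n^{3/2}\log n)$ parameters whose Frobenius error $\|M-(S+R)\|_F$ is at most $\gamma\sqrt{n}$. (2) For any matrix $R\in\mathbb{R}^{n\times n}$ whose rank satisfies $n-\mathrm{rank}(R) = \Omega(n)$, with probability at least $1-n^{-1}$ we have $\|M-R\|_F \geq \Omega(\sqrt{n})$. (3) Any matrix $E_S\in\mathbb{R}^{n\times n}$ with row sparsity $k$ (each row has fewer than $k$ nonzero entries) such that $n-k=\omega(1)$ satisfies $\|M-E_S\|_F\geq\Omega(\sqrt{n})$ with probability at least $1-n^{-1}$.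
   Context: Asymptotic notation $O,\Omega,\Theta,o,\omega$ is with respect to $n\to\infty$. The number of parameters of a sparse + low-rank matrix $S + UV^\top$ is the number of nonzeros of $S$ plus the number of entries of the low-rank factors (e.g. $n\cdot\mathrm{rank}$). $\log$ denotes the natural logarithm. *)

theory Defs
  imports "HOL-Probability.Probability" "HOL-Library.Landau_Symbols"
          "Jordan_Normal_Form.DL_Rank"
begin

text \<open>Square n x n real matrices are represented as functions nat => nat => real;
  only the entries with indices i < n, j < n are meaningful.\<close>

definition sign_pats :: "nat \<Rightarrow> nat \<Rightarrow> (nat \<times> nat \<Rightarrow> real) set" where
  "sign_pats n d = ({..<n} \<times> {..<d}) \<rightarrow>\<^sub>E {-1, 1}"

definition sign_pmf :: "nat \<Rightarrow> nat \<Rightarrow> (nat \<times> nat \<Rightarrow> real) pmf" where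
  "sign_pmf n d = pmf_of_set (sign_pats n d)"

definition Qmat :: "nat \<Rightarrow> (nat \<times> nat \<Rightarrow> real) \<Rightarrow> nat \<Rightarrow> nat \<Rightarrow> real" where
  "Qmat d s i l = s (i, l) / sqrt (real d)"

definition Mmat :: "nat \<Rightarrow> (nat \<times> nat \<Rightarrow> real) \<Rightarrow> nat \<Rightarrow> nat \<Rightarrow> real" where
  "Mmat d s i j = exp (\<Sum>l<d. Qmat d s i l * Qmat d s j l)"

definition prQ :: "nat \<Rightarrow> nat \<Rightarrow> ((nat \<times> nat \<Rightarrow> real) \<Rightarrow> bool) \<Rightarrow> real" where
  "prQ n d P = measure_pmf.prob (sign_pmf n d) {s. P s}"

definition fro :: "nat \<Rightarrow> (nat \<Rightarrow> nat \<Rightarrow> real) \<Rightarrow> real" where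
  "fro n A = sqrt (\<Sum>i<n. \<Sum>j<n. (A i j)\<^sup>2)"

definition nnz :: "nat \<Rightarrow> (nat \<Rightarrow> nat \<Rightarrow> real) \<Rightarrow> nat" where
  "nnz n A = card {(i, j). i < n \<and> j < n \<and> A i j \<noteq> 0}"

definition row_nnz :: "nat \<Rightarrow> (nat \<Rightarrow> nat \<Rightarrow> real) \<Rightarrow> nat \<Rightarrow> nat" where
  "row_nnz n A i = card {j. j < n \<and> A i j \<noteq> 0}"

definition lowrank :: "nat \<Rightarrow> (nat \<Rightarrow> nat \<Rightarrow> real) \<Rightarrow> (nat \<Rightarrow> nat \<Rightarrow> real) \<Rightarrow> nat \<Rightarrow> nat \<Rightarrow> real" where
  "lowrank r U V i j = (\<Sum>l<r. U i l * V j l)"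

definition mrank :: "nat \<Rightarrow> (nat \<Rightarrow> nat \<Rightarrow> real) \<Rightarrow> nat" where
  "mrank n A = vec_space.rank n (mat n n (\<lambda>(i, j). A i j))"

end

theory Submission
  imports Defs "HOL-Real_Asymp.Real_Asymp"
begin

(* Write M i j = exp (<x_i, x_j> / d) for sign vectors x_i in {-1,1}^d, so that every entry
   lies in [1/e, e].

   Sparse + low rank: since x_il x_jl = +-1, exp (x_il x_jl / d) = cosh (1/d) + x_il x_jl sinh (1/d),
   and multiplying out gives the Walsh expansion M = sum over T of w_T chi_T chi_T^T, where T ranges
   over the subsets of {..<d}, chi_T i = prod_(l in T) x_il and w_T <= e / d^|T|.  Keeping only the
   terms with |T| <= K, K ~ 4 ln n / ln ln n, leaves an entrywise error <= 1/n, with rank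
   sum_(k <= K) (d choose k) <= (e d / K)^K = n^o(1) <= sqrt n.  When gamma < 1/sqrt n the
   parameter budget exceeds n^2 and M itself is a sparse estimator.

   Low rank alone: flipping the first sign of x_i for all i in E changes every entry (i, j) with
   i in E, j notin E by at least 2/(e d), so the two matrices are at Frobenius distance at least
   2 sqrt (|E| (n - |E|)) / (e d).  Hence two patterns in the same orbit of the flip group that are
   both within sqrt n / e of a fixed R differ by a set E with |E| < 2 d^2 or n - |E| < 2 d^2; an orbit
   of size 2^n thus meets that ball in at most 2 (2 d^2) n^(2 d^2) = 2^o(n) points.

   Sparse alone: a row with fewer than n nonzero entries has a zero, where the error is >= 1/e. *)

section \<open>Sign patterns, the Frobenius norm and row-sparse matrices\<close>

lemma sign_pats_finite: "finite (sign_pats n d)"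
  unfolding sign_pats_def by (auto intro: finite_PiE)

lemma sign_pats_nonempty: "sign_pats n d \<noteq> {}"
  unfolding sign_pats_def by (simp add: PiE_eq_empty_iff)

lemma prQ_eq_card_ratio: "prQ n d P = card {s \<in> sign_pats n d. P s} / card (sign_pats n d)"
  unfolding prQ_def sign_pmf_def
  using measure_pmf_of_set[OF sign_pats_nonempty sign_pats_finite]
  by (simp add: Int_def conj_commute)

lemma prQ_eq_1: "(\<And>s. s \<in> sign_pats n d \<Longrightarrow> P s) \<Longrightarrow> prQ n d P = 1"
  unfolding prQ_eq_card_ratio using sign_pats_nonempty sign_pats_finite
  by (simp add: card_gt_0_iff cong: conj_cong)

lemma sign_pats_abs:
  assumes "s \<in> sign_pats n d" "i < n" "l < d"
  shows "\<bar>s (i, l)\<bar> = 1"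
proof -
  have "s (i, l) \<in> {-1, 1}" using assms unfolding sign_pats_def by auto
  then show ?thesis by auto
qed

definition inner_signs :: "nat \<Rightarrow> (nat \<times> nat \<Rightarrow> real) \<Rightarrow> nat \<Rightarrow> nat \<Rightarrow> real" where
  "inner_signs d s i j = (\<Sum>l<d. s (i, l) * s (j, l))"

lemma Mmat_eq_exp_inner_signs: "Mmat d s i j = exp (inner_signs d s i j / real d)"
proof -
  have "Qmat d s i l * Qmat d s j l = s (i, l) * s (j, l) / real d" for l
    unfolding Qmat_def by (simp add: field_simps)
  then show ?thesis
    unfolding Mmat_def inner_signs_def by (simp add: sum_divide_distrib)
qed

lemma abs_inner_signs_le:
  assumes "s \<in> sign_pats n d" "i < n" "j < n"
  shows "\<bar>inner_signs d s i j\<bar> \<le> real d"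
proof -
  have "\<bar>inner_signs d s i j\<bar> \<le> (\<Sum>l<d. \<bar>s (i, l)\<bar> * \<bar>s (j, l)\<bar>)"
    unfolding inner_signs_def abs_mult[symmetric] by (rule sum_abs)
  also have "\<dots> = real d"
    using sign_pats_abs[OF assms(1,2)] sign_pats_abs[OF assms(1,3)] by simp
  finally show ?thesis .
qed

lemma inner_signs_div_ge:
  assumes "s \<in> sign_pats n d" "i < n" "j < n"
  shows "-1 \<le> inner_signs d s i j / real d"
  using abs_inner_signs_le[OF assms] by (cases "d = 0") (auto simp: field_simps abs_le_iff)

lemma Mmat_ge_exp_neg1:
  assumes "s \<in> sign_pats n d" "i < n" "j < n"
  shows "exp (-1) \<le> Mmat d s i j"
  using inner_signs_div_ge[OF assms] by (simp add: Mmat_eq_exp_inner_signs)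

lemma fro_nonneg: "0 \<le> fro n A"
  unfolding fro_def by (simp add: sum_nonneg)

lemma fro_diff_triangle:
  "fro n (\<lambda>i j. A i j - C i j) \<le> fro n (\<lambda>i j. A i j - B i j) + fro n (\<lambda>i j. C i j - B i j)"
proof -
  have L2: "fro n X = L2_set (\<lambda>p. X (fst p) (snd p)) ({..<n} \<times> {..<n})" for X
    unfolding fro_def L2_set_def by (simp add: sum.cartesian_product case_prod_beta)
  have "fro n (\<lambda>i j. A i j - C i j)
      \<le> fro n (\<lambda>i j. A i j - B i j) + fro n (\<lambda>i j. B i j - C i j)"
    unfolding L2 using L2_set_triangle_ineq[of "\<lambda>p. A (fst p) (snd p) - B (fst p) (snd p)"
        "\<lambda>p. B (fst p) (snd p) - C (fst p) (snd p)"] by simp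
  moreover have "fro n (\<lambda>i j. B i j - C i j) = fro n (\<lambda>i j. C i j - B i j)"
    unfolding fro_def by (simp add: power2_commute)
  ultimately show ?thesis by simp
qed

lemma fro_le_of_entrywise:
  assumes "\<And>i j. i < n \<Longrightarrow> j < n \<Longrightarrow> \<bar>A i j\<bar> \<le> a"
  shows "fro n A \<le> real n * a"
proof (cases "n = 0")
  case False
  then have "0 \<le> a" using assms[of 0 0] by simp
  have "fro n A \<le> sqrt (\<Sum>i<n. \<Sum>j<n. a\<^sup>2)"
    unfolding fro_def using assms \<open>0 \<le> a\<close>
    by (intro real_sqrt_le_mono sum_mono) (simp add: abs_le_square_iff[symmetric])
  also have "\<dots> = real n * a"
    using \<open>0 \<le> a\<close> by (simp add: real_sqrt_mult power2_eq_square[symmetric])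
  finally show ?thesis .
qed (simp add: fro_def)

lemma fro_ge_of_rowwise:
  assumes "\<And>i. i < n \<Longrightarrow> \<exists>j<n. a \<le> \<bar>A i j\<bar>" and "0 \<le> a"
  shows "a * sqrt (real n) \<le> fro n A"
proof -
  have "a\<^sup>2 \<le> (\<Sum>j<n. (A i j)\<^sup>2)" if i: "i < n" for i
  proof -
    obtain j where "j < n" "a \<le> \<bar>A i j\<bar>" using assms(1)[OF i] by blast
    then have "a\<^sup>2 \<le> (A i j)\<^sup>2"
      using \<open>0 \<le> a\<close> by (simp add: abs_le_square_iff[symmetric])
    also have "\<dots> \<le> (\<Sum>j<n. (A i j)\<^sup>2)"
      using \<open>j < n\<close> by (intro member_le_sum) auto
    finally show ?thesis .
  qed
  then have "real n * a\<^sup>2 \<le> (\<Sum>i<n. \<Sum>j<n. (A i j)\<^sup>2)"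
    using sum_mono[of "{..<n}" "\<lambda>_. a\<^sup>2"] by simp
  then have "sqrt (real n * a\<^sup>2) \<le> fro n A"
    unfolding fro_def by (rule real_sqrt_le_mono)
  then show ?thesis
    using \<open>0 \<le> a\<close> by (simp add: real_sqrt_mult mult.commute)
qed

lemma fro_Mmat_minus_row_sparse:
  assumes "s \<in> sign_pats n d" and "\<And>i. i < n \<Longrightarrow> row_nnz n E i < n"
  shows "exp (-1) * sqrt (real n) \<le> fro n (\<lambda>i j. Mmat d s i j - E i j)"
proof (rule fro_ge_of_rowwise)
  fix i assume i: "i < n"
  have "\<exists>j<n. E i j = 0"
  proof (rule ccontr)
    assume "\<not> ?thesis"
    then have "{j. j < n \<and> E i j \<noteq> 0} = {..<n}" by auto
    then show False using assms(2)[OF i] unfolding row_nnz_def by simp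
  qed
  then show "\<exists>j<n. exp (-1) \<le> \<bar>Mmat d s i j - E i j\<bar>"
    using Mmat_ge_exp_neg1[OF assms(1) i] by fastforce
qed simp

lemma eventually_prQ_far_from_row_sparse:
  fixes E :: "nat \<Rightarrow> nat \<Rightarrow> nat \<Rightarrow> real"
  assumes "filterlim (\<lambda>n. real n - real (k n)) at_top sequentially"
    and "eventually (\<lambda>n. \<forall>i<n. row_nnz n (E n) i < k n) sequentially"
  shows "eventually (\<lambda>n. prQ n (d n) (\<lambda>s. fro n (\<lambda>i j. Mmat (d n) s i j - E n i j) \<ge> exp (-1) * sqrt (real n))
    = 1) sequentially"
  using assms(2) assms(1)[unfolded filterlim_at_top, rule_format, of 1]
proof eventually_elim
  case (elim n)
  then have "\<And>i. i < n \<Longrightarrow> row_nnz n (E n) i < n" by fastforce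
  then show ?case
    using fro_Mmat_minus_row_sparse by (intro prQ_eq_1) blast
qed

section \<open>The Walsh expansion and a sparse plus low-rank estimator\<close>

definition walsh_weight :: "nat \<Rightarrow> nat set \<Rightarrow> real" where
  "walsh_weight d T = sinh (1 / real d) ^ card T * cosh (1 / real d) ^ (d - card T)"

definition walsh_char :: "(nat \<times> nat \<Rightarrow> real) \<Rightarrow> nat \<Rightarrow> nat set \<Rightarrow> real" where
  "walsh_char s i T = (\<Prod>l\<in>T. s (i, l))"

lemma exp_mult_sign:
  fixes v a :: real
  assumes "\<bar>v\<bar> = 1"
  shows "exp (v * a) = sinh a * v + cosh a"
  using assms by (auto simp: cosh_def sinh_def field_simps abs_if split: if_splits)

lemma Mmat_walsh_expansion:
  assumes s: "s \<in> sign_pats n d" and i: "i < n" and j: "j < n"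
  shows "Mmat d s i j = (\<Sum>T\<in>Pow {..<d}. walsh_weight d T * (walsh_char s i T * walsh_char s j T))"
proof -
  let ?a = "1 / real d"
  have "Mmat d s i j = (\<Prod>l<d. exp (s (i, l) * s (j, l) * ?a))"
    by (simp add: Mmat_eq_exp_inner_signs inner_signs_def sum_divide_distrib exp_sum)
  also have "\<dots> = (\<Prod>l<d. sinh ?a * (s (i, l) * s (j, l)) + cosh ?a)"
  proof (intro prod.cong refl)
    fix l assume "l \<in> {..<d}"
    then have "\<bar>s (i, l) * s (j, l)\<bar> = 1"
      using sign_pats_abs[OF s i] sign_pats_abs[OF s j] by (simp add: abs_mult)
    then show "exp (s (i, l) * s (j, l) * ?a) = sinh ?a * (s (i, l) * s (j, l)) + cosh ?a"
      by (rule exp_mult_sign)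
  qed
  also have "\<dots> = (\<Sum>T\<in>Pow {..<d}. (\<Prod>l\<in>T. sinh ?a * (s (i, l) * s (j, l))) * (\<Prod>l\<in>{..<d} - T. cosh ?a))"
    by (rule prod_add) simp
  also have "\<dots> = (\<Sum>T\<in>Pow {..<d}. walsh_weight d T * (walsh_char s i T * walsh_char s j T))"
  proof (rule sum.cong)
    fix T assume "T \<in> Pow {..<d}"
    then have "card ({..<d} - T) = d - card T"
      by (simp add: card_Diff_subset finite_subset)
    then show "(\<Prod>l\<in>T. sinh ?a * (s (i, l) * s (j, l))) * (\<Prod>l\<in>{..<d} - T. cosh ?a)
      = walsh_weight d T * (walsh_char s i T * walsh_char s j T)"
      unfolding walsh_weight_def walsh_char_def by (simp add: prod.distrib)
  qed simp
  finally show ?thesis .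
qed

lemma abs_walsh_char:
  assumes "s \<in> sign_pats n d" "i < n" "T \<subseteq> {..<d}"
  shows "\<bar>walsh_char s i T\<bar> = 1"
  using sign_pats_abs[OF assms(1,2)] assms(3) unfolding walsh_char_def abs_prod
  by (intro prod.neutral) auto

lemma sinh_le_mult_exp:
  fixes a :: real
  assumes "0 \<le> a"
  shows "sinh a \<le> a * exp a"
proof -
  have "exp a * (1 - 2 * a) \<le> exp a * exp (-2 * a)"
    using exp_ge_add_one_self[of "-2 * a"] by (intro mult_left_mono) auto
  also have "\<dots> = exp (-a)" by (simp flip: exp_add)
  finally show ?thesis unfolding sinh_def by (simp add: field_simps)
qed

lemma walsh_weight_nonneg: "0 \<le> walsh_weight d T"
  unfolding walsh_weight_def by (simp add: cosh_def add_nonneg_nonneg)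

lemma walsh_weight_le:
  assumes "0 < d" "card T \<le> d"
  shows "walsh_weight d T \<le> exp 1 / real d ^ card T"
proof -
  let ?a = "1 / real d"
  have "cosh ?a \<le> exp ?a"
    unfolding cosh_def using exp_le_cancel_iff[of "- ?a" ?a] by simp
  then have "walsh_weight d T \<le> (?a * exp ?a) ^ card T * exp ?a ^ (d - card T)"
    unfolding walsh_weight_def using sinh_le_mult_exp[of ?a]
    by (intro mult_mono power_mono) (auto simp: cosh_def add_nonneg_nonneg)
  also have "\<dots> = ?a ^ card T * exp ?a ^ (card T + (d - card T))"
    by (simp only: power_mult_distrib power_add mult.assoc)
  also have "\<dots> = ?a ^ card T * exp 1"
    using assms by (simp flip: exp_of_nat_mult)
  finally show ?thesis by (simp add: power_one_over)
qed

lemma pow_div_exp_le_fact: "(real k / exp 1) ^ k \<le> fact k"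
proof -
  have "real k ^ k / fact k \<le> exp (real k)"
    using sum_le_suminf[OF summable_exp, of "{k}" "real k"]
    by (simp add: exp_def divide_inverse mult.commute)
  then show ?thesis
    by (simp add: power_divide divide_le_eq exp_of_nat_mult[symmetric] mult.commute)
qed

lemma binomial_div_pow_le: "real (d choose k) / real d ^ k \<le> 1 / fact k"
proof (cases "d = 0")
  case False
  have "real (d choose k) * fact k \<le> real d ^ k"
    by (metis binomial_fact_pow of_nat_fact of_nat_le_iff of_nat_mult of_nat_power)
  then show ?thesis using False by (simp add: field_simps)
qed (cases k; simp)

lemma card_subsets_le_card: "card {T \<in> Pow {..<d}. card T \<le> K} = (\<Sum>k\<le>K. d choose k)"
proof -
  let ?F = "{T \<in> Pow {..<d}. card T \<le> K}"
  have "card ?F = (\<Sum>k\<in>{..K}. \<Sum>T\<in>{T \<in> ?F. card T = k}. 1)"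
    by (simp only: card_eq_sum, rule sum.group[symmetric]) auto
  also have "\<dots> = (\<Sum>k\<le>K. d choose k)"
  proof (intro sum.cong refl)
    fix k assume "k \<in> {..K}"
    then have "{T \<in> ?F. card T = k} = {T. T \<subseteq> {..<d} \<and> card T = k}" by auto
    then show "(\<Sum>T\<in>{T \<in> ?F. card T = k}. 1) = d choose k" by (simp add: n_subsets)
  qed
  finally show ?thesis .
qed

lemma sum_binomial_le_exp_pow:
  assumes "0 < K" "K \<le> d"
  shows "(\<Sum>k\<le>K. real (d choose k)) \<le> (exp 1 * real d / real K) ^ K"
proof -
  let ?x = "real K / real d"
  have x: "0 < ?x" "?x \<le> 1" using assms by auto
  have "?x ^ K * (\<Sum>k\<le>K. real (d choose k)) \<le> (\<Sum>k\<le>K. real (d choose k) * ?x ^ k)"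
    unfolding sum_distrib_left
  proof (intro sum_mono)
    fix k assume "k \<in> {..K}"
    then have "?x ^ K \<le> ?x ^ k" using x by (intro power_decreasing) auto
    then show "?x ^ K * real (d choose k) \<le> real (d choose k) * ?x ^ k"
      by (simp add: mult.commute mult_left_mono)
  qed
  also have "\<dots> \<le> (\<Sum>k\<le>d. real (d choose k) * ?x ^ k)"
    using assms by (intro sum_mono2) auto
  also have "\<dots> = (?x + 1) ^ d"
    by (simp add: binomial_ring mult.commute)
  also have "\<dots> \<le> exp (real K)"
    using exp_ge_one_plus_x_over_n_power_n[of d "real K"] assms by (simp add: add.commute)
  also have "\<dots> = exp 1 ^ K" by (simp flip: exp_of_nat_mult)
  finally have "(\<Sum>k\<le>K. real (d choose k)) \<le> exp 1 ^ K / ?x ^ K"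
    using x by (simp add: pos_le_divide_eq mult.commute)
  also have "\<dots> = (exp 1 * real d / real K) ^ K"
    by (simp add: power_divide power_mult_distrib)
  finally show ?thesis .
qed

lemma walsh_tail_le:
  assumes "0 < d"
  shows "(\<Sum>T\<in>{T \<in> Pow {..<d}. K < card T}. walsh_weight d T) \<le> real d * exp 1 / fact (K + 1)"
proof -
  let ?G = "{T \<in> Pow {..<d}. K < card T}"
  have card_le: "card T \<le> d" if "T \<in> Pow {..<d}" for T
    using that card_mono[of "{..<d}" T] by auto
  have "(\<Sum>T\<in>?G. walsh_weight d T) \<le> (\<Sum>T\<in>?G. exp 1 / real d ^ card T)"
    using card_le by (intro sum_mono walsh_weight_le[OF assms]) auto
  also have "\<dots> = (\<Sum>k\<in>{K<..d}. \<Sum>T\<in>{T \<in> ?G. card T = k}. exp 1 / real d ^ card T)"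
    by (rule sum.group[symmetric]) (use card_le in auto)
  also have "\<dots> = (\<Sum>k\<in>{K<..d}. exp 1 * (real (d choose k) / real d ^ k))"
  proof (intro sum.cong refl)
    fix k assume "k \<in> {K<..d}"
    then have "{T \<in> ?G. card T = k} = {T. T \<subseteq> {..<d} \<and> card T = k}" by auto
    then show "(\<Sum>T\<in>{T \<in> ?G. card T = k}. exp 1 / real d ^ card T) = exp 1 * (real (d choose k) / real d ^ k)"
      by (simp add: n_subsets)
  qed
  also have "\<dots> \<le> (\<Sum>k\<in>{K<..d}. exp 1 / fact (K + 1))"
  proof (intro sum_mono)
    fix k assume "k \<in> {K<..d}"
    then have "exp 1 * (real (d choose k) / real d ^ k) \<le> exp 1 * (1 / fact k)"
      by (intro mult_left_mono binomial_div_pow_le) auto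
    also have "\<dots> \<le> exp 1 * (1 / fact (K + 1))"
      using \<open>k \<in> {K<..d}\<close> by (intro mult_left_mono divide_left_mono fact_mono) auto
    finally show "exp 1 * (real (d choose k) / real d ^ k) \<le> exp 1 / fact (K + 1)" by simp
  qed
  also have "\<dots> = real (d - K) * (exp 1 / fact (K + 1))"
    by simp
  also have "\<dots> \<le> real d * (exp 1 / fact (K + 1))"
    by (intro mult_right_mono) simp_all
  finally show ?thesis by simp
qed

lemma Mmat_lowrank_approx:
  assumes s: "s \<in> sign_pats n d" and "0 < d" "0 < n"
    and fact: "exp 1 * real d * real n \<le> fact (K + 1)"
  shows "\<exists>U V. fro n (\<lambda>i j. Mmat d s i j - lowrank (card {T \<in> Pow {..<d}. card T \<le> K}) U V i j) \<le> 1"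
proof -
  define F where "F = {T \<in> Pow {..<d}. card T \<le> K}"
  define G where "G = {T \<in> Pow {..<d}. K < card T}"
  obtain g where g: "bij_betw g {..<card F} F"
    using ex_bij_betw_nat_finite[of F] unfolding F_def atLeast0LessThan by auto
  define U where "U = (\<lambda>i t. walsh_weight d (g t) * walsh_char s i (g t))"
  define V where "V = (\<lambda>j t. walsh_char s j (g t))"
  have lowrank_eq: "lowrank (card F) U V i j = (\<Sum>T\<in>F. walsh_weight d T * (walsh_char s i T * walsh_char s j T))" for i j
    unfolding lowrank_def U_def V_def mult.assoc by (rule sum.reindex_bij_betw[OF g])
  have "\<bar>Mmat d s i j - lowrank (card F) U V i j\<bar> \<le> 1 / real n" if i: "i < n" and j: "j < n" for i j
  proof -
    let ?h = "\<lambda>T. walsh_weight d T * (walsh_char s i T * walsh_char s j T)"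
    have "Pow {..<d} = F \<union> G" "F \<inter> G = {}" "finite F" "finite G"
      unfolding F_def G_def by auto
    then have "(\<Sum>T\<in>Pow {..<d}. ?h T) = (\<Sum>T\<in>F. ?h T) + (\<Sum>T\<in>G. ?h T)"
      by (simp add: sum.union_disjoint)
    then have "Mmat d s i j - lowrank (card F) U V i j = (\<Sum>T\<in>G. ?h T)"
      unfolding Mmat_walsh_expansion[OF s i j] lowrank_eq by simp
    also have "\<bar>\<dots>\<bar> \<le> (\<Sum>T\<in>G. \<bar>?h T\<bar>)"
      by (rule sum_abs)
    also have "\<dots> = (\<Sum>T\<in>G. walsh_weight d T)"
      using abs_walsh_char[OF s i] abs_walsh_char[OF s j] walsh_weight_nonneg
      by (intro sum.cong refl) (simp add: G_def abs_mult)
    also have "\<dots> \<le> real d * exp 1 / fact (K + 1)"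
      unfolding G_def by (rule walsh_tail_le[OF \<open>0 < d\<close>])
    also have "\<dots> \<le> 1 / real n"
      using fact \<open>0 < n\<close> by (simp add: field_simps del: fact_Suc)
    finally show ?thesis .
  qed
  then have "fro n (\<lambda>i j. Mmat d s i j - lowrank (card F) U V i j) \<le> real n * (1 / real n)"
    by (rule fro_le_of_entrywise)
  then show ?thesis
    using \<open>0 < n\<close> unfolding F_def by auto
qed

lemma nnz_le: "nnz n A \<le> n * n"
proof -
  have "nnz n A \<le> card ({..<n} \<times> {..<n})"
    unfolding nnz_def by (rule card_mono) auto
  then show ?thesis by simp
qed

lemma sparse_plus_lowrank_estimator:
  fixes A :: "nat \<Rightarrow> nat \<Rightarrow> real"
  assumes approx: "fro n (\<lambda>i j. A i j - lowrank r U V i j) \<le> 1"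
    and r: "real r \<le> sqrt (real n)" and ln_n: "1 \<le> ln (real n)" and \<gamma>: "0 < \<gamma>" "\<gamma> \<le> 1"
  shows "\<exists>S U V r. real (nnz n S + n * r + n * r) \<le> 2 / \<gamma> * real n powr (3/2) * ln (real n)
    \<and> fro n (\<lambda>i j. A i j - (S i j + lowrank r U V i j)) \<le> \<gamma> * sqrt (real n)"
proof -
  have budget: "2 / \<gamma> * real n powr (3/2) * ln (real n) \<ge> 2 / \<gamma> * (real n * sqrt (real n))"
  proof -
    have "real n powr (3/2) = real n powr (1 + 1/2)" by simp
    also have "\<dots> = real n powr 1 * real n powr (1/2)" by (rule powr_add)
    also have "\<dots> = real n * sqrt (real n)"
      by (cases "n = 0") (simp_all add: powr_half_sqrt)
    finally have "real n powr (3/2) = real n * sqrt (real n)" .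
    moreover have "0 \<le> 2 / \<gamma> * (real n * sqrt (real n))"
      using \<gamma> by simp
    ultimately show ?thesis
      using mult_left_mono[OF ln_n] by fastforce
  qed
  show ?thesis
  proof (cases "\<gamma> * sqrt (real n) < 1")
    \<comment> \<open>then the budget exceeds \<open>n\<^sup>2\<close>, so \<open>A\<close> itself is a sparse estimator\<close>
    case True
    have "real (nnz n A) \<le> real n * (sqrt (real n) * sqrt (real n))"
      using nnz_le[of n A] by (simp add: of_nat_mult[symmetric] del: of_nat_mult)
    also have "\<dots> \<le> real n * (sqrt (real n) * (1 / \<gamma>))"
      using True \<gamma> by (intro mult_left_mono) (auto simp: field_simps)
    also have "\<dots> \<le> 2 / \<gamma> * (real n * sqrt (real n))"
      using \<gamma> by (simp add: field_simps)
    finally have "real (nnz n A + n * 0 + n * 0) \<le> 2 / \<gamma> * real n powr (3/2) * ln (real n)"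
      using budget by simp
    moreover have "fro n (\<lambda>i j. A i j - (A i j + lowrank 0 U V i j)) \<le> \<gamma> * sqrt (real n)"
      using \<gamma> by (simp add: fro_def lowrank_def)
    ultimately show ?thesis by blast
  next
    case False
    have "real (nnz n (\<lambda>i j. 0) + n * r + n * r) = 2 * (real n * real r)"
      by (simp add: nnz_def)
    also have "\<dots> \<le> 2 * (real n * sqrt (real n))"
      using r by (intro mult_left_mono) auto
    also have "\<dots> \<le> 2 / \<gamma> * (real n * sqrt (real n))"
      using \<gamma> by (intro mult_right_mono) (auto simp: field_simps)
    finally have "real (nnz n (\<lambda>i j. 0) + n * r + n * r) \<le> 2 / \<gamma> * real n powr (3/2) * ln (real n)"
      using budget by linarith
    moreover have "fro n (\<lambda>i j. A i j - (0 + lowrank r U V i j)) \<le> \<gamma> * sqrt (real n)"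
      using approx False by simp
    ultimately show ?thesis by blast
  qed
qed

lemma eventually_ln_ln_ge: "eventually (\<lambda>n::nat. c \<le> ln (ln (real n))) sequentially"
proof -
  have "filterlim (\<lambda>n::nat. ln (ln (real n))) at_top sequentially" by real_asymp
  then show ?thesis by (simp add: filterlim_at_top)
qed

lemma powr_le_fact_ceiling:
  fixes x :: real
  assumes "exp 1 \<le> x"
  shows "(x / exp 1) powr x \<le> fact (nat \<lceil>x\<rceil>)"
proof -
  have "0 < x" using assms exp_gt_zero[of 1] by linarith
  then have K: "x \<le> real (nat \<lceil>x\<rceil>)" by linarith
  have "(x / exp 1) powr x \<le> (x / exp 1) powr real (nat \<lceil>x\<rceil>)"
    using K assms by (intro powr_mono) auto
  also have "\<dots> = (x / exp 1) ^ nat \<lceil>x\<rceil>"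
    using \<open>0 < x\<close> by (intro powr_realpow) simp
  also have "\<dots> \<le> (real (nat \<lceil>x\<rceil>) / exp 1) ^ nat \<lceil>x\<rceil>"
    using K \<open>0 < x\<close> by (intro power_mono divide_right_mono) auto
  also have "\<dots> \<le> fact (nat \<lceil>x\<rceil>)" by (rule pow_div_exp_le_fact)
  finally show ?thesis .
qed

lemma power_le_exp_mult_ln:
  fixes a y :: real
  assumes "1 \<le> a" "real K \<le> y"
  shows "a ^ K \<le> exp (y * ln a)"
proof -
  have "a ^ K = exp (real K * ln a)"
    using assms by (simp add: exp_of_nat_mult)
  also have "\<dots> \<le> exp (y * ln a)"
    using assms by (intro exp_mono mult_right_mono) auto
  finally show ?thesis .
qed

lemma eventually_truncation_degree:
  assumes d: "eventually (\<lambda>n. ln (real n) \<le> real (d n) \<and> real (d n) \<le> C * ln (real n)) sequentially"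
  shows "eventually (\<lambda>n. \<exists>K. 0 < K \<and> K \<le> d n \<and> exp 1 * real (d n) * real n \<le> fact (K + 1)
    \<and> (exp 1 * real (d n) / real K) ^ K \<le> sqrt (real n)) sequentially"
proof -
  \<comment> \<open>\<open>K = \<lceil>4 L / ln L\<rceil>\<close> with \<open>L = ln n\<close>: then \<open>K! \<ge> (K/e)\<^sup>K\<close> beats \<open>n L\<^sup>2\<close>, while \<open>e d / K = O(ln L)\<close>\<close>
  have "eventually (\<lambda>n::nat. exp 1 \<le> 4 * ln (real n) / ln (ln (real n))) sequentially"
    and "eventually (\<lambda>n::nat. 4 * ln (real n) / ln (ln (real n)) + 1 \<le> ln (real n)) sequentially"
    and "eventually (\<lambda>n::nat. exp 1 * ln (real n) ^ 2 * real n
      \<le> (4 * ln (real n) / ln (ln (real n)) / exp 1) powr (4 * ln (real n) / ln (ln (real n)))) sequentially"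
    and "eventually (\<lambda>n::nat. exp ((4 * ln (real n) / ln (ln (real n)) + 1) * ln (ln (ln (real n)) ^ 2))
      \<le> sqrt (real n)) sequentially"
    and "eventually (\<lambda>n::nat. ln (ln (real n)) \<le> ln (real n)) sequentially"
    by real_asymp+
  then show ?thesis
    using d eventually_ln_ln_ge[of C] eventually_ln_ln_ge[of 1]
  proof eventually_elim
    case (elim n)
    define L where "L = ln (real n)"
    define l where "l = ln L"
    define x where "x = 4 * L / l"
    define K where "K = nat \<lceil>x\<rceil>"
    have x_ge: "exp 1 \<le> x" and "x + 1 \<le> L" and fact_x: "exp 1 * L ^ 2 * real n \<le> (x / exp 1) powr x"
      and pow_l: "exp ((x + 1) * ln (l ^ 2)) \<le> sqrt (real n)" and "l \<le> L"
      and d_ge: "L \<le> real (d n)" and d_le: "real (d n) \<le> C * L" and "C \<le> l" "1 \<le> l"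
      using elim unfolding x_def l_def L_def by auto
    have "0 < x" using x_ge exp_gt_zero[of 1] by linarith
    have K: "x \<le> real K" "real K < x + 1" unfolding K_def using \<open>0 < x\<close> by linarith+
    have "0 < L" using \<open>1 \<le> l\<close> \<open>l \<le> L\<close> by linarith
    moreover have "L \<le> C * L" using d_ge d_le by linarith
    ultimately have "1 \<le> C" by (simp add: mult_le_cancel_right1)
    have "exp 1 * real (d n) * real n \<le> exp 1 * L ^ 2 * real n"
      using d_le \<open>C \<le> l\<close> \<open>l \<le> L\<close> \<open>0 < L\<close>
      by (intro mult_right_mono mult_left_mono) (auto simp: power2_eq_square intro: order_trans)
    also have "\<dots> \<le> fact K"
      using fact_x powr_le_fact_ceiling[OF x_ge] unfolding K_def by linarith
    also have "\<dots> \<le> fact (K + 1)" by (intro fact_mono) simp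
    finally have fact_K: "exp 1 * real (d n) * real n \<le> fact (K + 1)" .
    have "exp 1 * real (d n) / real K \<le> exp 1 * (C * L) / x"
      using d_le K \<open>0 < x\<close> by (intro frac_le mult_left_mono) auto
    also have "\<dots> = exp 1 * C / 4 * l"
      using \<open>0 < x\<close> \<open>1 \<le> l\<close> unfolding x_def by (simp add: field_simps)
    also have "\<dots> \<le> l ^ 2"
      unfolding power2_eq_square
    proof (intro mult_right_mono)
      have "exp 1 * C \<le> 3 * C" using exp_le \<open>1 \<le> C\<close> by (intro mult_right_mono) auto
      then show "exp 1 * C / 4 \<le> l" using \<open>C \<le> l\<close> \<open>1 \<le> C\<close> by linarith
    qed (use \<open>1 \<le> l\<close> in simp)
    finally have "(exp 1 * real (d n) / real K) ^ K \<le> (l ^ 2) ^ K"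
      by (rule power_mono) simp
    also have "\<dots> \<le> exp ((x + 1) * ln (l ^ 2))"
      using K \<open>1 \<le> l\<close> by (intro power_le_exp_mult_ln) (auto simp: one_le_power)
    finally have "(exp 1 * real (d n) / real K) ^ K \<le> sqrt (real n)"
      using pow_l by linarith
    moreover have "0 < K" "K \<le> d n"
      using K \<open>0 < x\<close> \<open>x + 1 \<le> L\<close> d_ge by linarith+
    ultimately show ?case
      using fact_K by blast
  qed
qed

lemma eventually_sparse_plus_lowrank_estimator:
  assumes d: "eventually (\<lambda>n. ln (real n) \<le> real (d n) \<and> real (d n) \<le> C * ln (real n)) sequentially"
  shows "eventually (\<lambda>n. \<forall>\<gamma>::real. 0 < \<gamma> \<and> \<gamma> \<le> 1 \<longrightarrow>
    prQ n (d n) (\<lambda>s. \<exists>S U V r.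
        real (nnz n S + n * r + n * r) \<le> 2 / \<gamma> * real n powr (3/2) * ln (real n)
      \<and> fro n (\<lambda>i j. Mmat (d n) s i j - (S i j + lowrank r U V i j)) \<le> \<gamma> * sqrt (real n)) = 1) sequentially"
  using eventually_truncation_degree[OF d] d eventually_ge_at_top[of 3]
proof eventually_elim
  case (elim n)
  then obtain K where K: "0 < K" "K \<le> d n" "exp 1 * real (d n) * real n \<le> fact (K + 1)"
    "(exp 1 * real (d n) / real K) ^ K \<le> sqrt (real n)" by blast
  have "1 \<le> ln (real n)"
    using elim exp_le by (simp add: ln_ge_iff)
  then have "0 < d n" using elim by linarith
  define r where "r = card {T \<in> Pow {..<d n}. card T \<le> K}"
  have "real r \<le> sqrt (real n)"
    unfolding r_def card_subsets_le_card of_nat_sum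
    using sum_binomial_le_exp_pow[OF K(1,2)] K(4) by linarith
  show ?case
  proof (intro allI impI prQ_eq_1)
    fix \<gamma> :: real and s assume "0 < \<gamma> \<and> \<gamma> \<le> 1" "s \<in> sign_pats n (d n)"
    then obtain U V where "fro n (\<lambda>i j. Mmat (d n) s i j - lowrank r U V i j) \<le> 1"
      using Mmat_lowrank_approx[OF _ \<open>0 < d n\<close> _ K(3)] elim unfolding r_def by fastforce
    then show "\<exists>S U V r. real (nnz n S + n * r + n * r) \<le> 2 / \<gamma> * real n powr (3/2) * ln (real n)
      \<and> fro n (\<lambda>i j. Mmat (d n) s i j - (S i j + lowrank r U V i j)) \<le> \<gamma> * sqrt (real n)"
      using sparse_plus_lowrank_estimator \<open>real r \<le> sqrt (real n)\<close> \<open>1 \<le> ln (real n)\<close>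
        \<open>0 < \<gamma> \<and> \<gamma> \<le> 1\<close> by blast
  qed
qed

section \<open>Distance to a fixed matrix\<close>

definition flip_first :: "nat set \<Rightarrow> (nat \<times> nat \<Rightarrow> real) \<Rightarrow> nat \<times> nat \<Rightarrow> real" where
  "flip_first E s = (\<lambda>(i, l). if l = 0 \<and> i \<in> E then - s (i, l) else s (i, l))"

lemma flip_first_in_sign_pats:
  assumes "s \<in> sign_pats n d" "E \<subseteq> {..<n}" "0 < d"
  shows "flip_first E s \<in> sign_pats n d"
  using assms unfolding sign_pats_def flip_first_def PiE_def extensional_def Pi_def
  by (auto split: if_splits)

lemma flip_first_flip_first: "flip_first A (flip_first B s) = flip_first (sym_diff A B) s"
  unfolding flip_first_def by (auto simp: fun_eq_iff)

lemma flip_first_involution: "flip_first A (flip_first A s) = s"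
  unfolding flip_first_def by (auto simp: fun_eq_iff)

lemma inner_signs_flip_first:
  assumes "0 < d" "i \<in> E" "j \<notin> E"
  shows "inner_signs d (flip_first E s) i j = inner_signs d s i j - 2 * (s (i, 0) * s (j, 0))"
proof -
  have split: "inner_signs d t i j = t (i, 0) * t (j, 0) + (\<Sum>l\<in>{..<d} - {0}. t (i, l) * t (j, l))" for t
    unfolding inner_signs_def using \<open>0 < d\<close> by (subst sum.remove[of _ 0]) auto
  have "(\<Sum>l\<in>{..<d} - {0}. flip_first E s (i, l) * flip_first E s (j, l))
      = (\<Sum>l\<in>{..<d} - {0}. s (i, l) * s (j, l))"
    by (rule sum.cong) (auto simp: flip_first_def)
  then show ?thesis
    using assms unfolding split[of s] split[of "flip_first E s"] by (simp add: flip_first_def)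
qed

lemma exp_diff_ge_exp_neg1:
  fixes a b :: real
  assumes "-1 \<le> a" "-1 \<le> b"
  shows "exp (-1) * \<bar>b - a\<bar> \<le> \<bar>exp b - exp a\<bar>"
proof -
  have *: "exp (-1) * (y - x) \<le> exp y - exp x" if "-1 \<le> x" "x \<le> y" for x y :: real
  proof -
    have "exp (-1) * (y - x) \<le> exp x * (y - x)"
      using that by (intro mult_right_mono) auto
    also have "\<dots> \<le> exp x * (exp (y - x) - 1)"
      using exp_ge_add_one_self[of "y - x"] by (intro mult_left_mono) (linarith, simp)
    also have "\<dots> = exp y - exp x"
      by (simp add: exp_diff field_simps)
    finally show ?thesis .
  qed
  show ?thesis
    using *[OF assms(1)] *[OF assms(2)] by (cases "a \<le> b") auto
qed

lemma Mmat_flip_first_entry_diff: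
  assumes s: "s \<in> sign_pats n d" and E: "E \<subseteq> {..<n}" and "0 < d"
    and i: "i \<in> E" and j: "j < n" "j \<notin> E"
  shows "2 / (exp 1 * real d) \<le> \<bar>Mmat d s i j - Mmat d (flip_first E s) i j\<bar>"
proof -
  have "i < n" using i E by auto
  have s': "flip_first E s \<in> sign_pats n d" by (rule flip_first_in_sign_pats[OF s E \<open>0 < d\<close>])
  have "\<bar>s (i, 0) * s (j, 0)\<bar> = 1"
    using sign_pats_abs[OF s \<open>i < n\<close> \<open>0 < d\<close>] sign_pats_abs[OF s j(1) \<open>0 < d\<close>]
    by (simp add: abs_mult)
  then have "\<bar>inner_signs d s i j / real d - inner_signs d (flip_first E s) i j / real d\<bar> = 2 / real d"
    using inner_signs_flip_first[OF \<open>0 < d\<close> i j(2)] \<open>0 < d\<close>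
    by (simp add: diff_divide_distrib[symmetric] abs_divide abs_mult)
  then show ?thesis
    using exp_diff_ge_exp_neg1[OF inner_signs_div_ge[OF s' \<open>i < n\<close> j(1)] inner_signs_div_ge[OF s \<open>i < n\<close> j(1)]]
    by (simp add: Mmat_eq_exp_inner_signs exp_minus field_simps)
qed

lemma fro_Mmat_flip_first_ge:
  assumes s: "s \<in> sign_pats n d" and E: "E \<subseteq> {..<n}" and "0 < d"
  shows "real (card E) * real (n - card E) * (2 / (exp 1 * real d))\<^sup>2
    \<le> (fro n (\<lambda>i j. Mmat d s i j - Mmat d (flip_first E s) i j))\<^sup>2"
proof -
  let ?D = "\<lambda>i j. (Mmat d s i j - Mmat d (flip_first E s) i j)\<^sup>2"
  have "finite E" using E finite_subset by blast
  then have "card ({..<n} - E) = n - card E" using E by (simp add: card_Diff_subset)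
  then have "real (card E) * real (n - card E) * (2 / (exp 1 * real d))\<^sup>2
      = (\<Sum>i\<in>E. \<Sum>j\<in>{..<n} - E. (2 / (exp 1 * real d))\<^sup>2)" by simp
  also have "\<dots> \<le> (\<Sum>i\<in>E. \<Sum>j\<in>{..<n} - E. ?D i j)"
    using Mmat_flip_first_entry_diff[OF s E \<open>0 < d\<close>]
    by (intro sum_mono) (simp add: abs_le_square_iff[symmetric])
  also have "\<dots> \<le> (\<Sum>i\<in>E. \<Sum>j<n. ?D i j)"
    by (intro sum_mono sum_mono2) auto
  also have "\<dots> \<le> (\<Sum>i<n. \<Sum>j<n. ?D i j)"
    using E by (intro sum_mono2) (auto intro: sum_nonneg)
  also have "\<dots> = (fro n (\<lambda>i j. Mmat d s i j - Mmat d (flip_first E s) i j))\<^sup>2"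
    unfolding fro_def by (simp add: sum_nonneg)
  finally show ?thesis .
qed

lemma flip_first_both_close_imp_unbalanced:
  assumes t: "t \<in> sign_pats n d" and E: "E \<subseteq> {..<n}" and "0 < d"
    and close1: "fro n (\<lambda>i j. Mmat d t i j - R i j) < exp (-1) * sqrt (real n)"
    and close2: "fro n (\<lambda>i j. Mmat d (flip_first E t) i j - R i j) < exp (-1) * sqrt (real n)"
  shows "card E < 2 * d\<^sup>2 \<or> n - card E < 2 * d\<^sup>2"
proof (rule ccontr)
  assume "\<not> ?thesis"
  then have c1: "2 * d\<^sup>2 \<le> card E" and c2: "2 * d\<^sup>2 \<le> n - card E" by auto
  let ?F = "fro n (\<lambda>i j. Mmat d t i j - Mmat d (flip_first E t) i j)"
  have "?F < 2 * (exp (-1) * sqrt (real n))"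
    using fro_diff_triangle[of n "Mmat d t" "Mmat d (flip_first E t)" R] close1 close2 by simp
  then have "?F\<^sup>2 < (2 * (exp (-1) * sqrt (real n)))\<^sup>2"
    using fro_nonneg by (intro power_strict_mono) auto
  also have "\<dots> = 4 * real n / (exp 1)\<^sup>2"
    by (simp add: power_mult_distrib exp_minus power_divide field_simps)
  finally have "real (card E) * real (n - card E) * (2 / (exp 1 * real d))\<^sup>2 < 4 * real n / (exp 1)\<^sup>2"
    using fro_Mmat_flip_first_ge[OF t E \<open>0 < d\<close>] by linarith
  then have lt: "real (card E) * real (n - card E) < real n * (real d)\<^sup>2"
    using \<open>0 < d\<close> by (simp add: power_divide power_mult_distrib field_simps)
  \<comment> \<open>the larger of the two parts has at least \<open>n/2\<close> elements, the smaller at least \<open>2 d\<^sup>2\<close>\<close>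
  have "n * d\<^sup>2 \<le> card E * (n - card E)"
  proof (cases "card E \<le> n - card E")
    case True
    then have "n * d\<^sup>2 \<le> (2 * (n - card E)) * d\<^sup>2" by (intro mult_le_mono1) linarith
    also have "\<dots> = (n - card E) * (2 * d\<^sup>2)" by simp
    also have "\<dots> \<le> (n - card E) * card E" using c1 by (rule mult_le_mono2)
    finally show ?thesis by (simp add: mult.commute)
  next
    case False
    then have "n * d\<^sup>2 \<le> (2 * card E) * d\<^sup>2" by (intro mult_le_mono1) linarith
    also have "\<dots> = card E * (2 * d\<^sup>2)" by simp
    also have "\<dots> \<le> card E * (n - card E)" using c2 by (rule mult_le_mono2)
    finally show ?thesis .
  qed
  then have "real (n * d\<^sup>2) \<le> real (card E * (n - card E))" by (rule of_nat_mono)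
  then have "real n * (real d)\<^sup>2 \<le> real (card E) * real (n - card E)"
    by (simp only: of_nat_mult of_nat_power)
  with lt show False by linarith
qed

lemma card_small_subsets_le:
  assumes "0 < n"
  shows "card {E. E \<subseteq> {..<n} \<and> card E < m} \<le> m * n ^ m"
proof -
  have "{E. E \<subseteq> {..<n} \<and> card E < m} = (\<Union>k<m. {E. E \<subseteq> {..<n} \<and> card E = k})"
    by auto
  then have "card {E. E \<subseteq> {..<n} \<and> card E < m} \<le> (\<Sum>k<m. card {E. E \<subseteq> {..<n} \<and> card E = k})"
    using card_UN_le[of "{..<m}"] by simp
  also have "\<dots> = (\<Sum>k<m. n choose k)" by (simp add: n_subsets)
  also have "\<dots> \<le> (\<Sum>k<m. n ^ m)"
  proof (intro sum_mono)
    fix k assume "k \<in> {..<m}"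
    have "n choose k \<le> n ^ k"
      by (cases "k \<le> n") (auto simp: binomial_le_pow binomial_eq_0)
    also have "\<dots> \<le> n ^ m" using assms \<open>k \<in> {..<m}\<close> by (intro power_increasing) auto
    finally show "n choose k \<le> n ^ m" .
  qed
  finally show ?thesis by simp
qed

lemma card_mult_le_by_double_counting:
  fixes f :: "'i \<Rightarrow> 'a \<Rightarrow> 'a"
  assumes "finite P" "finite N" "B \<subseteq> P"
    and bij: "\<And>A. A \<in> N \<Longrightarrow> bij_betw (f A) P P"
    and few: "\<And>s. s \<in> P \<Longrightarrow> card {A \<in> N. f A s \<in> B} \<le> m"
  shows "card N * card B \<le> card P * m"
proof -
  have preimage: "card {s \<in> P. f A s \<in> B} = card B" if "A \<in> N" for A
  proof -
    have "inj_on (f A) P" "f A ` P = P"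
      using bij[OF that] unfolding bij_betw_def by auto
    then have "f A ` {s \<in> P. f A s \<in> B} = B"
      using \<open>B \<subseteq> P\<close> by auto
    moreover have "inj_on (f A) {s \<in> P. f A s \<in> B}"
      using \<open>inj_on (f A) P\<close> by (rule inj_on_subset) auto
    ultimately show ?thesis
      using card_image by fastforce
  qed
  have "card N * card B = (\<Sum>A\<in>N. card {s \<in> P. f A s \<in> B})"
    by (simp add: preimage)
  also have "\<dots> = (\<Sum>A\<in>N. \<Sum>s\<in>P. if f A s \<in> B then 1 else 0)"
    using \<open>finite P\<close> by (simp add: sum.If_cases Int_def conj_commute)
  also have "\<dots> = (\<Sum>s\<in>P. \<Sum>A\<in>N. if f A s \<in> B then 1 else 0)"
    by (rule sum.swap)
  also have "\<dots> = (\<Sum>s\<in>P. card {A \<in> N. f A s \<in> B})"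
    using \<open>finite N\<close> by (simp add: sum.If_cases Int_def conj_commute)
  also have "\<dots> \<le> (\<Sum>s\<in>P. m)"
    using few by (rule sum_mono)
  finally show ?thesis by simp
qed

lemma card_unbalanced_subsets_le:
  assumes "0 < n"
  shows "card {E. E \<subseteq> {..<n} \<and> (card E < m \<or> n - card E < m)} \<le> 2 * (m * n ^ m)"
proof -
  let ?Small = "{E. E \<subseteq> {..<n} \<and> card E < m}"
  have "finite ?Small" by (rule finite_subset[of _ "Pow {..<n}"]) auto
  have "{E. E \<subseteq> {..<n} \<and> (card E < m \<or> n - card E < m)} \<subseteq> ?Small \<union> (\<lambda>E. {..<n} - E) ` ?Small"
  proof
    fix E assume "E \<in> {E. E \<subseteq> {..<n} \<and> (card E < m \<or> n - card E < m)}"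
    then have E: "E \<subseteq> {..<n}" "card E < m \<or> n - card E < m" by auto
    from E(2) show "E \<in> ?Small \<union> (\<lambda>E. {..<n} - E) ` ?Small"
    proof
      assume "card E < m"
      then show ?thesis using E(1) by simp
    next
      assume "n - card E < m"
      moreover have "card ({..<n} - E) = n - card E"
        using E(1) by (simp add: card_Diff_subset finite_subset)
      ultimately have "{..<n} - E \<in> ?Small" by simp
      moreover have "E = {..<n} - ({..<n} - E)" using E(1) by auto
      ultimately show ?thesis by (intro UnI2 image_eqI)
    qed
  qed
  then have "card {E. E \<subseteq> {..<n} \<and> (card E < m \<or> n - card E < m)}
      \<le> card (?Small \<union> (\<lambda>E. {..<n} - E) ` ?Small)"
    using \<open>finite ?Small\<close> by (intro card_mono) auto
  also have "\<dots> \<le> card ?Small + card ?Small"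
    by (rule order_trans[OF card_Un_le add_left_mono[OF card_image_le[OF \<open>finite ?Small\<close>]]])
  also have "\<dots> \<le> 2 * (m * n ^ m)"
    using card_small_subsets_le[OF assms, of m] by simp
  finally show ?thesis .
qed

lemma card_flips_close_to_fixed_le:
  fixes R :: "nat \<Rightarrow> nat \<Rightarrow> real" and n d :: nat
  defines "Close \<equiv> {t \<in> sign_pats n d. fro n (\<lambda>i j. Mmat d t i j - R i j) < exp (-1) * sqrt (real n)}"
  assumes "0 < d" "0 < n"
  shows "card {A \<in> Pow {..<n}. flip_first A s \<in> Close} \<le> 2 * (2 * d\<^sup>2 * n ^ (2 * d\<^sup>2))"
proof (cases "{A \<in> Pow {..<n}. flip_first A s \<in> Close} = {}")
  case True
  then show ?thesis by (simp only: card.empty le0)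
next
  case False
  define Unbal where "Unbal = {E. E \<subseteq> {..<n} \<and> (card E < 2 * d\<^sup>2 \<or> n - card E < 2 * d\<^sup>2)}"
  have "finite Unbal" unfolding Unbal_def by (rule finite_subset[of _ "Pow {..<n}"]) auto
  obtain A0 where A0: "A0 \<subseteq> {..<n}" "flip_first A0 s \<in> Close" using False by auto
  define t where "t = flip_first A0 s"
  have "{A \<in> Pow {..<n}. flip_first A s \<in> Close} \<subseteq> (\<lambda>E. sym_diff E A0) ` Unbal"
  proof
    fix A assume A: "A \<in> {A \<in> Pow {..<n}. flip_first A s \<in> Close}"
    define E where "E = sym_diff A A0"
    have E: "E \<subseteq> {..<n}" using A A0 unfolding E_def by auto
    have A_eq: "A = sym_diff E A0" unfolding E_def by blast
    have "flip_first E t = flip_first A s"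
      by (simp only: t_def flip_first_flip_first A_eq[symmetric])
    then have "card E < 2 * d\<^sup>2 \<or> n - card E < 2 * d\<^sup>2"
      using A A0 t_def \<open>0 < d\<close> unfolding Close_def
      by (intro flip_first_both_close_imp_unbalanced[OF _ E, of t]) auto
    then have "E \<in> Unbal" using E unfolding Unbal_def by simp
    then show "A \<in> (\<lambda>E. sym_diff E A0) ` Unbal"
      using A_eq by (rule rev_image_eqI)
  qed
  then have "card {A \<in> Pow {..<n}. flip_first A s \<in> Close} \<le> card ((\<lambda>E. sym_diff E A0) ` Unbal)"
    using \<open>finite Unbal\<close> by (intro card_mono) auto
  also have "\<dots> \<le> card Unbal"
    using \<open>finite Unbal\<close> by (rule card_image_le)
  also have "\<dots> \<le> 2 * (2 * d\<^sup>2 * n ^ (2 * d\<^sup>2))"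
    unfolding Unbal_def by (rule card_unbalanced_subsets_le[OF \<open>0 < n\<close>])
  finally show ?thesis .
qed

lemma card_close_to_fixed_le:
  fixes R :: "nat \<Rightarrow> nat \<Rightarrow> real"
  assumes "0 < d" "0 < n"
  shows "2 ^ n * card {s \<in> sign_pats n d. fro n (\<lambda>i j. Mmat d s i j - R i j) < exp (-1) * sqrt (real n)}
    \<le> card (sign_pats n d) * (2 * (2 * d\<^sup>2 * n ^ (2 * d\<^sup>2)))"
proof -
  have "card (Pow {..<n}) * card {s \<in> sign_pats n d. fro n (\<lambda>i j. Mmat d s i j - R i j) < exp (-1) * sqrt (real n)}
      \<le> card (sign_pats n d) * (2 * (2 * d\<^sup>2 * n ^ (2 * d\<^sup>2)))"
  proof (rule card_mult_le_by_double_counting[where f = flip_first])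
    fix A assume "A \<in> Pow {..<n}"
    then show "bij_betw (flip_first A) (sign_pats n d) (sign_pats n d)"
      using flip_first_in_sign_pats[of _ n d A] flip_first_involution \<open>0 < d\<close>
      by (intro bij_betw_byWitness[where f' = "flip_first A"]) auto
  next
    fix s
    show "card {A \<in> Pow {..<n}. flip_first A s
        \<in> {s \<in> sign_pats n d. fro n (\<lambda>i j. Mmat d s i j - R i j) < exp (-1) * sqrt (real n)}}
      \<le> 2 * (2 * d\<^sup>2 * n ^ (2 * d\<^sup>2))"
      by (rule card_flips_close_to_fixed_le[OF assms])
  qed (simp_all add: sign_pats_finite)
  then show ?thesis by (simp add: card_Pow)
qed

lemma prQ_far_from_fixed_ge:
  fixes R :: "nat \<Rightarrow> nat \<Rightarrow> real"
  assumes "0 < d" "0 < n" and count: "2 * (2 * d\<^sup>2 * n ^ (2 * d\<^sup>2)) * n \<le> 2 ^ n"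
  shows "1 - 1 / real n \<le> prQ n d (\<lambda>s. exp (-1) * sqrt (real n) \<le> fro n (\<lambda>i j. Mmat d s i j - R i j))"
proof -
  define P where "P = sign_pats n d"
  define Close where "Close = {s \<in> P. fro n (\<lambda>i j. Mmat d s i j - R i j) < exp (-1) * sqrt (real n)}"
  have "2 ^ n * (card Close * n) \<le> card P * (2 * (2 * d\<^sup>2 * n ^ (2 * d\<^sup>2)) * n)"
    using card_close_to_fixed_le[OF assms(1,2), of R] unfolding P_def Close_def
    by (simp only: mult.assoc[symmetric] mult_le_mono1)
  also have "\<dots> \<le> card P * 2 ^ n"
    using count by simp
  finally have "card Close * n \<le> card P" by simp
  then have "real (card Close) * real n \<le> real (card P)"
    by (metis of_nat_le_iff of_nat_mult)
  moreover have "0 < card P" unfolding P_def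
    using sign_pats_nonempty sign_pats_finite by (simp add: card_gt_0_iff)
  moreover have "card (P - Close) = card P - card Close"
    unfolding Close_def P_def by (rule card_Diff_subset) (auto intro: finite_subset sign_pats_finite)
  moreover have "card Close \<le> card P"
    unfolding Close_def P_def by (rule card_mono) (auto simp: sign_pats_finite)
  moreover have "{s \<in> P. exp (-1) * sqrt (real n) \<le> fro n (\<lambda>i j. Mmat d s i j - R i j)} = P - Close"
    unfolding Close_def by auto
  ultimately show ?thesis
    using \<open>0 < n\<close> unfolding prQ_eq_card_ratio P_def[symmetric]
    by (simp add: of_nat_diff field_simps)
qed

lemma eventually_flip_count_le:
  assumes "eventually (\<lambda>n. real (d n) \<le> C * ln (real n)) sequentially"
  shows "eventually (\<lambda>n. 2 * (2 * (d n)\<^sup>2 * n ^ (2 * (d n)\<^sup>2)) * n \<le> 2 ^ n) sequentially"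
proof -
  have "eventually (\<lambda>n::nat. 2 * (2 * ln (real n) ^ 4) * real n powr (2 * ln (real n) ^ 4) * real n
      \<le> 2 powr real n) sequentially"
    and "eventually (\<lambda>n::nat. C \<le> ln (real n)) sequentially"
    by real_asymp+
  then show ?thesis
    using assms eventually_ge_at_top[of 1]
  proof eventually_elim
    case (elim n)
    define L where "L = ln (real n)"
    define m where "m = 2 * (d n)\<^sup>2"
    have "0 \<le> L" using elim unfolding L_def by simp
    have "real (d n) \<le> L\<^sup>2"
      using elim \<open>0 \<le> L\<close> unfolding L_def power2_eq_square
      by (meson mult_right_mono order_trans)
    then have "(real (d n))\<^sup>2 \<le> (L\<^sup>2)\<^sup>2"
      by (intro power_mono) auto
    then have m: "real m \<le> 2 * L ^ 4"
      unfolding m_def by (simp add: power_mult[symmetric])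
    have "real (2 * (m * n ^ m) * n) = 2 * real m * real n powr real m * real n"
      using elim by (simp add: powr_realpow)
    also have "\<dots> \<le> 2 * (2 * L ^ 4) * real n powr (2 * L ^ 4) * real n"
      using m elim by (intro mult_mono powr_mono) auto
    also have "\<dots> \<le> 2 powr real n"
      using elim unfolding L_def by simp
    also have "\<dots> = real (2 ^ n)"
      by (simp add: powr_realpow)
    finally show ?case
      unfolding m_def by (simp only: of_nat_le_iff mult.assoc)
  qed
qed

lemma eventually_prQ_far_from_fixed:
  fixes R :: "nat \<Rightarrow> nat \<Rightarrow> nat \<Rightarrow> real"
  assumes d: "eventually (\<lambda>n. ln (real n) \<le> real (d n) \<and> real (d n) \<le> C * ln (real n)) sequentially"
  shows "eventually (\<lambda>n. prQ n (d n) (\<lambda>s. fro n (\<lambda>i j. Mmat (d n) s i j - R n i j) \<ge> exp (-1) * sqrt (real n))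
    \<ge> 1 - 1 / real n) sequentially"
proof -
  have d_le: "eventually (\<lambda>n. real (d n) \<le> C * ln (real n)) sequentially"
    using d by (rule eventually_mono) simp
  show ?thesis
    using d eventually_flip_count_le[OF d_le] eventually_ge_at_top[of 3]
  proof eventually_elim
    case (elim n)
    have "1 \<le> ln (real n)"
      using elim exp_le by (simp add: ln_ge_iff)
    then have "0 < d n" using elim by linarith
    then show ?case
      using prQ_far_from_fixed_ge[of "d n" n] elim by simp
  qed
qed

section \<open>Logarithmic dimension\<close>

lemma eventually_ln_le_d_le_const_ln:
  fixes \<epsilon> :: real and d :: "nat \<Rightarrow> nat"
  assumes "0 < \<epsilon>" "\<epsilon> \<le> 1/2"
    and d_lb: "eventually (\<lambda>n. 6 / \<epsilon>\<^sup>2 * ln (real n) \<le> real (d n)) sequentially"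
    and d_Theta: "(\<lambda>n. real (d n)) \<in> \<Theta>(\<lambda>n. ln (real n) / \<epsilon>\<^sup>2)"
  shows "\<exists>C. eventually (\<lambda>n. ln (real n) \<le> real (d n) \<and> real (d n) \<le> C * ln (real n)) sequentially"
proof -
  have "\<epsilon>\<^sup>2 \<le> 1/4" "0 < \<epsilon>\<^sup>2"
    using assms power_mono[of \<epsilon> "1/2" 2] by (simp_all add: power_divide)
  then have "1 \<le> 6 / \<epsilon>\<^sup>2" by (simp add: field_simps)
  obtain c where "eventually (\<lambda>n. norm (real (d n)) \<le> c * norm (ln (real n) / \<epsilon>\<^sup>2)) sequentially"
    using bigthetaD1[OF d_Theta] by (elim landau_o.bigE)
  then have "eventually (\<lambda>n. ln (real n) \<le> real (d n) \<and> real (d n) \<le> c / \<epsilon>\<^sup>2 * ln (real n)) sequentially"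
    using d_lb eventually_ge_at_top[of 1]
  proof eventually_elim
    case (elim n)
    then have "0 \<le> ln (real n)" by simp
    then show ?case
      using elim mult_right_mono[OF \<open>1 \<le> 6 / \<epsilon>\<^sup>2\<close>, of "ln (real n)"] \<open>0 < \<epsilon>\<^sup>2\<close>
      by (simp add: abs_of_nonneg)
  qed
  then show ?thesis by blast
qed

theorem mainTheorem1:
  fixes \<epsilon> :: real and d :: "nat \<Rightarrow> nat"
  assumes eps: "0 < \<epsilon>" "\<epsilon> \<le> 1/2"
    and d_lb: "eventually (\<lambda>n. 6 / \<epsilon>\<^sup>2 * ln (real n) \<le> real (d n)) sequentially"
    and d_Theta: "(\<lambda>n. real (d n)) \<in> \<Theta>(\<lambda>n. ln (real n) / \<epsilon>\<^sup>2)"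
  shows
    "(\<exists>C>0. eventually (\<lambda>n. \<forall>\<gamma>::real. 0 < \<gamma> \<and> \<gamma> \<le> 1 \<longrightarrow>
        prQ n (d n) (\<lambda>s. \<exists>S U V r.
            real (nnz n S + n * r + n * r) \<le> C / \<gamma> * real n powr (3/2) * ln (real n)
          \<and> fro n (\<lambda>i j. Mmat (d n) s i j - (S i j + lowrank r U V i j)) \<le> \<gamma> * sqrt (real n))
        \<ge> 1 - 1 / real n) sequentially)
   \<and> (\<forall>R :: nat \<Rightarrow> nat \<Rightarrow> nat \<Rightarrow> real.
        (\<lambda>n. real n - real (mrank n (R n))) \<in> \<Omega>(\<lambda>n. real n) \<longrightarrow>
        (\<exists>c>0. eventually (\<lambda>n.
           prQ n (d n) (\<lambda>s. fro n (\<lambda>i j. Mmat (d n) s i j - R n i j) \<ge> c * sqrt (real n))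
             \<ge> 1 - 1 / real n) sequentially))
   \<and> (\<forall>(k :: nat \<Rightarrow> nat) (E :: nat \<Rightarrow> nat \<Rightarrow> nat \<Rightarrow> real).
        filterlim (\<lambda>n. real n - real (k n)) at_top sequentially \<longrightarrow>
        eventually (\<lambda>n. \<forall>i<n. row_nnz n (E n) i < k n) sequentially \<longrightarrow>
        (\<exists>c>0. eventually (\<lambda>n.
           prQ n (d n) (\<lambda>s. fro n (\<lambda>i j. Mmat (d n) s i j - E n i j) \<ge> c * sqrt (real n))
             \<ge> 1 - 1 / real n) sequentially))"
proof -
  obtain C where d: "eventually (\<lambda>n. ln (real n) \<le> real (d n) \<and> real (d n) \<le> C * ln (real n)) sequentially"
    using eventually_ln_le_d_le_const_ln[OF eps d_lb d_Theta] by blast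
  show ?thesis
    apply (intro conjI allI impI)
    subgoal
      using eventually_sparse_plus_lowrank_estimator[OF d]
      by (intro exI[of _ 2]) (auto elim!: eventually_mono)
    subgoal for R
      using eventually_prQ_far_from_fixed[OF d, of R] by (intro exI[of _ "exp (-1)"]) simp
    subgoal premises sparse for k E
      using eventually_prQ_far_from_row_sparse[OF sparse, of d]
      by (intro exI[of _ "exp (-1)"]) (auto elim!: eventually_mono)
    done
qed

end
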